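(* Let $0<\zeta\le1$, place a spike at the origin, and let $s^1,s^2,s^3$ be its three nearest samples for some sampling grid of spacing $\zeta$ (any relative position). Let $W^1,W^2$ be the corresponding wave functions. Then for $i=1,2$ and all $t\in\mathbb{R}^2$ with $\|t\|\ge10$, the absolute values of $W^i(t)$ and of each of its first and second partial derivatives at $t$ are bounded by $$g(t)=\frac{6\|t\|^2}{\zeta}\exp\!\Big(-\frac{\|t\|^2}{2}+\sqrt2\,\zeta\|t\|\Big),$$ and if moreover $10^{-2}\le\zeta\le1$ then $g(t)<2\cdot10^{-9}$ for all such $t$.
   Context: $K(t)=\exp(-\|t\|^2/2)$. The three nearest samples of a spike $t_0$: three vertices of a grid square of side $\zeta$ forming a right isosceles triangle with axis-parallel legs of length $\zeta$ that contains $t_0$. The waves of spike $t_0$ are the unique functions $W^i(u)=\kappa_iK(s^1-u)+\mu_iK(s^2-u)+\rho_iK(s^3-u)$ with $W^1(t_0)=0,\partial_xW^1(t_0)=1,\partial_yW^1(t_0)=0$ and $W^2(t_0)=0,\partial_xW^2(t_0)=0,\partial_yW^2(t_0)=1$; derivatives are with respect to $u$. *)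

theory Defs
  imports "HOL-Analysis.Analysis"
begin

text \<open>Points of the plane are pairs; the norm on real \<times> real is the Euclidean norm.\<close>

definition gaussK :: "real \<times> real \<Rightarrow> real" where
  "gaussK t = exp (- (norm t)\<^sup>2 / 2)"

definition wave :: "real \<Rightarrow> real \<Rightarrow> real \<Rightarrow> real \<times> real \<Rightarrow> real \<times> real \<Rightarrow> real \<times> real
    \<Rightarrow> real \<times> real \<Rightarrow> real" where
  "wave \<kappa> \<mu> \<rho> s1 s2 s3 u = \<kappa> * gaussK (s1 - u) + \<mu> * gaussK (s2 - u) + \<rho> * gaussK (s3 - u)"

definition dx :: "(real \<times> real \<Rightarrow> real) \<Rightarrow> real \<times> real \<Rightarrow> real" where
  "dx f u = deriv (\<lambda>x. f (x, snd u)) (fst u)"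

definition dy :: "(real \<times> real \<Rightarrow> real) \<Rightarrow> real \<times> real \<Rightarrow> real" where
  "dy f u = deriv (\<lambda>y. f (fst u, y)) (snd u)"

text \<open>Three nearest samples of a spike at t0: vertices of a right isosceles triangle with
  axis-parallel legs of length zeta (half of a grid square of side zeta) containing t0.\<close>
definition nearest_samples :: "real \<Rightarrow> real \<times> real \<Rightarrow> real \<times> real \<Rightarrow> real \<times> real \<Rightarrow> real \<times> real \<Rightarrow> bool" where
  "nearest_samples \<zeta> t0 s1 s2 s3 \<longleftrightarrow>
     (\<exists>c \<sigma>1 \<sigma>2. \<sigma>1 \<in> {-1, 1} \<and> \<sigma>2 \<in> {-1, 1} \<and>
        {s1, s2, s3} = {c, c + (\<sigma>1 * \<zeta>, 0), c + (0, \<sigma>2 * \<zeta>)}) \<and>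
     t0 \<in> convex hull {s1, s2, s3}"

definition gbound :: "real \<Rightarrow> real \<times> real \<Rightarrow> real" where
  "gbound \<zeta> t = 6 * (norm t)\<^sup>2 / \<zeta> * exp (- (norm t)\<^sup>2 / 2 + sqrt 2 * \<zeta> * norm t)"

end

theory Submission
  imports Defs
begin

text \<open>
  Write a wave as \<open>W = \<Sum>\<^sub>j c\<^sub>j K(s\<^sub>j - \<cdot>)\<close>. The interpolation conditions at the spike say that the
  weights \<open>a\<^sub>j = c\<^sub>j K(s\<^sub>j)\<close> sum to zero and have first moment \<open>\<Sum>\<^sub>j a\<^sub>j s\<^sub>j\<close> equal to a unit
  vector; as the samples are the vertices of a right isosceles triangle with legs \<open>\<zeta>\<close>, this
  forces \<open>\<bar>a\<^sub>j\<bar> \<le> 1/\<zeta>\<close>. Every derivative of order at most 2 of \<open>K(s - t)\<close> is \<open>P(s - t) K(s - t)\<close>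
  with \<open>\<bar>P v\<bar> \<le> \<parallel>v\<parallel>\<^sup>2 + 1\<close>, and \<open>K(s - t) = K(s) exp(\<langle>s, t\<rangle> - \<parallel>t\<parallel>\<^sup>2/2)\<close>, where
  \<open>\<langle>s, t\<rangle> \<le> \<surd>2 \<zeta> \<parallel>t\<parallel>\<close> because the triangle containing the spike has diameter \<open>\<surd>2 \<zeta>\<close>.
  For \<open>\<parallel>t\<parallel> \<ge> 10\<close> the polynomial factor is at most \<open>2\<parallel>t\<parallel>\<^sup>2\<close>, and the three terms add up to
  \<open>g(t)\<close>. The numerical bound follows from \<open>r\<^sup>2 exp(-r\<^sup>2/2 + 3r/2) \<le> 100 exp(-35)\<close> for \<open>r \<ge> 10\<close>.
\<close>

definition kernel_sum :: "(real \<times> real \<Rightarrow> real) \<Rightarrow> real \<Rightarrow> real \<Rightarrow> real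
    \<Rightarrow> real \<times> real \<Rightarrow> real \<times> real \<Rightarrow> real \<times> real \<Rightarrow> real \<times> real \<Rightarrow> real" where
  "kernel_sum T \<kappa> \<mu> \<rho> s1 s2 s3 u = \<kappa> * T (s1 - u) + \<mu> * T (s2 - u) + \<rho> * T (s3 - u)"

definition gauss_mult :: "(real \<times> real \<Rightarrow> real) \<Rightarrow> real \<times> real \<Rightarrow> real" where
  "gauss_mult P v = P v * gaussK v"

text \<open>Up to sign, the partial derivatives of order at most 2 of \<open>gaussK\<close> are the
  functions \<open>gauss_mult P\<close> for these products of Hermite polynomials \<open>P\<close>.\<close>

definition hermite_factors :: "(real \<times> real \<Rightarrow> real) set" where
  "hermite_factors = {\<lambda>_. 1, fst, snd, \<lambda>v. (fst v)\<^sup>2 - 1, \<lambda>v. fst v * snd v, \<lambda>v. (snd v)\<^sup>2 - 1}"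

lemma wave_eq_kernel_sum: "wave \<kappa> \<mu> \<rho> s1 s2 s3 = kernel_sum gaussK \<kappa> \<mu> \<rho> s1 s2 s3"
  by (simp add: fun_eq_iff wave_def kernel_sum_def)

lemma gaussK_eq_gauss_mult: "gaussK = gauss_mult (\<lambda>_. 1)"
  by (simp add: fun_eq_iff gauss_mult_def)

lemma gaussK_Pair: "gaussK (x, y) = exp (- (x\<^sup>2 + y\<^sup>2) / 2)"
  by (simp add: gaussK_def norm_Pair)

text \<open>The kernel is evaluated at \<open>s - u\<close>, so differentiating in \<open>u\<close> flips the sign of its
  partial derivatives; hence the hypotheses below are stated with \<open>- T'\<close>.\<close>

lemma dx_kernel_sum:
  assumes "\<And>a b. ((\<lambda>x. T (x, b)) has_real_derivative - T' (a, b)) (at a)"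
  shows "dx (kernel_sum T \<kappa> \<mu> \<rho> s1 s2 s3) = kernel_sum T' \<kappa> \<mu> \<rho> s1 s2 s3"
proof
  have shifted: "((\<lambda>x. T (s - (x, y))) has_real_derivative T' (s - (x, y))) (at x)" for s x y
  proof -
    have "((\<lambda>x. T (fst s - x, snd s - y)) has_real_derivative - T' (fst s - x, snd s - y) * - 1) (at x)"
      by (rule DERIV_chain2[where f = "\<lambda>z. T (z, snd s - y)"]) (auto intro!: assms derivative_eq_intros)
    then show ?thesis by (cases s) simp
  qed
  show "dx (kernel_sum T \<kappa> \<mu> \<rho> s1 s2 s3) u = kernel_sum T' \<kappa> \<mu> \<rho> s1 s2 s3 u" for u
    unfolding dx_def kernel_sum_def
    by (intro DERIV_imp_deriv DERIV_add DERIV_cmult) (use shifted[where x = "fst u" and y = "snd u"] in simp_all)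
qed

lemma dy_kernel_sum:
  assumes "\<And>a b. ((\<lambda>y. T (a, y)) has_real_derivative - T' (a, b)) (at b)"
  shows "dy (kernel_sum T \<kappa> \<mu> \<rho> s1 s2 s3) = kernel_sum T' \<kappa> \<mu> \<rho> s1 s2 s3"
proof
  have shifted: "((\<lambda>y. T (s - (x, y))) has_real_derivative T' (s - (x, y))) (at y)" for s x y
  proof -
    have "((\<lambda>y. T (fst s - x, snd s - y)) has_real_derivative - T' (fst s - x, snd s - y) * - 1) (at y)"
      by (rule DERIV_chain2[where f = "\<lambda>z. T (fst s - x, z)"]) (auto intro!: assms derivative_eq_intros)
    then show ?thesis by (cases s) simp
  qed
  show "dy (kernel_sum T \<kappa> \<mu> \<rho> s1 s2 s3) u = kernel_sum T' \<kappa> \<mu> \<rho> s1 s2 s3 u" for u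
    unfolding dy_def kernel_sum_def
    by (intro DERIV_imp_deriv DERIV_add DERIV_cmult) (use shifted[where x = "fst u" and y = "snd u"] in simp_all)
qed

lemma gaussK_partials:
  "((\<lambda>x. gaussK (x, b)) has_real_derivative - gauss_mult fst (a, b)) (at a)"
  "((\<lambda>y. gaussK (a, y)) has_real_derivative - gauss_mult snd (a, b)) (at b)"
  by (auto simp: gaussK_Pair gauss_mult_def intro!: derivative_eq_intros)

lemma gauss_mult_partials:
  "((\<lambda>x. gauss_mult fst (x, b)) has_real_derivative - gauss_mult (\<lambda>v. (fst v)\<^sup>2 - 1) (a, b)) (at a)"
  "((\<lambda>y. gauss_mult fst (a, y)) has_real_derivative - gauss_mult (\<lambda>v. fst v * snd v) (a, b)) (at b)"
  "((\<lambda>x. gauss_mult snd (x, b)) has_real_derivative - gauss_mult (\<lambda>v. fst v * snd v) (a, b)) (at a)"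
  "((\<lambda>y. gauss_mult snd (a, y)) has_real_derivative - gauss_mult (\<lambda>v. (snd v)\<^sup>2 - 1) (a, b)) (at b)"
  unfolding gauss_mult_def[of fst] gauss_mult_def[of snd] fst_conv snd_conv
  by (auto intro!: derivative_eq_intros gaussK_partials simp: gauss_mult_def power2_eq_square algebra_simps)

lemmas kernel_sum_gauss_partials =
  dx_kernel_sum[OF gaussK_partials(1)] dy_kernel_sum[OF gaussK_partials(2)]
  dx_kernel_sum[OF gauss_mult_partials(1)] dy_kernel_sum[OF gauss_mult_partials(2)]
  dx_kernel_sum[OF gauss_mult_partials(3)] dy_kernel_sum[OF gauss_mult_partials(4)]

lemma right_triangle_vertices_distinct:
  fixes c :: "real \<times> real"
  assumes "0 < \<zeta>" "\<sigma>1 \<in> {-1, 1}" "\<sigma>2 \<in> {-1, 1}"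
  shows "c \<noteq> c + (\<sigma>1 * \<zeta>, 0)" "c \<noteq> c + (0, \<sigma>2 * \<zeta>)" "c + (\<sigma>1 * \<zeta>, 0) \<noteq> c + (0, \<sigma>2 * \<zeta>)"
proof -
  have "\<sigma>1 * \<zeta> \<noteq> 0" "\<sigma>2 * \<zeta> \<noteq> 0"
    using assms by auto
  then show "c \<noteq> c + (\<sigma>1 * \<zeta>, 0)" "c \<noteq> c + (0, \<sigma>2 * \<zeta>)" "c + (\<sigma>1 * \<zeta>, 0) \<noteq> c + (0, \<sigma>2 * \<zeta>)"
    by (auto simp: prod_eq_iff)
qed

lemma right_triangle_dist_le:
  fixes c :: "real \<times> real"
  assumes "0 \<le> \<zeta>" "\<sigma>1 \<in> {-1, 1}" "\<sigma>2 \<in> {-1, 1}"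
    and "x \<in> {c, c + (\<sigma>1 * \<zeta>, 0), c + (0, \<sigma>2 * \<zeta>)}" "y \<in> {c, c + (\<sigma>1 * \<zeta>, 0), c + (0, \<sigma>2 * \<zeta>)}"
  shows "dist x y \<le> sqrt 2 * \<zeta>"
proof -
  have leg: "\<zeta> \<le> sqrt 2 * \<zeta>"
    using assms(1) by (simp add: mult_le_cancel_right1)
  have hypotenuse: "sqrt ((\<sigma>1 * \<zeta>)\<^sup>2 + (\<sigma>2 * \<zeta>)\<^sup>2) = sqrt 2 * \<zeta>"
    using assms(1-3) by (auto simp: power_mult_distrib real_sqrt_mult)
  show ?thesis
    using assms leg hypotenuse by (auto simp: dist_norm norm_Pair power_mult_distrib)
qed

lemma right_triangle_weights_bound:
  fixes a :: "real \<times> real \<Rightarrow> real" and c v :: "real \<times> real"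
  assumes "0 < \<zeta>" "\<sigma>1 \<in> {-1, 1}" "\<sigma>2 \<in> {-1, 1}"
    and S: "S = {c, c + (\<sigma>1 * \<zeta>, 0), c + (0, \<sigma>2 * \<zeta>)}"
    and sum: "sum a S = 0" and moment: "(\<Sum>s\<in>S. a s *\<^sub>R s) = v"
  shows "\<forall>s\<in>S. \<bar>a s\<bar> \<le> (\<bar>fst v\<bar> + \<bar>snd v\<bar>) / \<zeta>"
proof -
  define Q R where "Q = c + (\<sigma>1 * \<zeta>, 0)" and "R = c + (0, \<sigma>2 * \<zeta>)"
  have distinct: "c \<noteq> Q" "c \<noteq> R" "Q \<noteq> R"
    unfolding Q_def R_def using right_triangle_vertices_distinct[OF assms(1-3)] by blast+
  have sum3: "a c + a Q + a R = 0"
    using sum distinct by (simp add: S Q_def R_def)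
  have "v = (a c + a Q + a R) *\<^sub>R c + a Q *\<^sub>R (\<sigma>1 * \<zeta>, 0) + a R *\<^sub>R (0, \<sigma>2 * \<zeta>)"
    using moment distinct by (simp add: S Q_def R_def algebra_simps)
  then have "fst v = a Q * \<sigma>1 * \<zeta>" "snd v = a R * \<sigma>2 * \<zeta>"
    by (simp_all add: sum3)
  then have "\<bar>a Q\<bar> * \<zeta> = \<bar>fst v\<bar>" "\<bar>a R\<bar> * \<zeta> = \<bar>snd v\<bar>"
    using assms(1-3) by (auto simp: abs_mult)
  moreover have "\<bar>a c\<bar> * \<zeta> \<le> (\<bar>a Q\<bar> + \<bar>a R\<bar>) * \<zeta>"
    using sum3 assms(1) by (intro mult_right_mono) linarith+
  ultimately show ?thesis
    using assms(1) by (auto simp: S Q_def[symmetric] R_def[symmetric] pos_le_divide_eq distrib_right)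
qed

lemma nearest_samples_weights_bound:
  assumes "nearest_samples \<zeta> t0 s1 s2 s3" "0 < \<zeta>"
    and "a1 + a2 + a3 = 0" "a1 *\<^sub>R s1 + a2 *\<^sub>R s2 + a3 *\<^sub>R s3 = v"
  shows "\<forall>a\<in>{a1, a2, a3}. \<bar>a\<bar> \<le> (\<bar>fst v\<bar> + \<bar>snd v\<bar>) / \<zeta>"
proof -
  obtain c \<sigma>1 \<sigma>2 where \<sigma>: "\<sigma>1 \<in> {-1, 1}" "\<sigma>2 \<in> {-1, 1}"
    and S: "{s1, s2, s3} = {c, c + (\<sigma>1 * \<zeta>, 0), c + (0, \<sigma>2 * \<zeta>)}"
    using assms(1) unfolding nearest_samples_def by blast
  have "card {s1, s2, s3} = 3"
    unfolding S using right_triangle_vertices_distinct[OF assms(2) \<sigma>] by simp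
  then have distinct: "s1 \<noteq> s2" "s1 \<noteq> s3" "s2 \<noteq> s3"
    by (auto simp: card_insert_if split: if_splits)
  \<comment> \<open>Attaching the weights to the (distinct) sample points makes their order irrelevant.\<close>
  define w where "w s = (if s = s1 then a1 else if s = s2 then a2 else a3)" for s
  have "\<forall>s\<in>{s1, s2, s3}. \<bar>w s\<bar> \<le> (\<bar>fst v\<bar> + \<bar>snd v\<bar>) / \<zeta>"
    by (rule right_triangle_weights_bound[OF assms(2) \<sigma> S])
      (use assms(3,4) distinct in \<open>simp_all add: w_def add.assoc\<close>)
  then show ?thesis
    using distinct by (simp add: w_def)
qed

lemma nearest_samples_dist_bound:
  assumes "nearest_samples \<zeta> t0 s1 s2 s3" "0 \<le> \<zeta>"
  shows "\<forall>s\<in>{s1, s2, s3}. dist s t0 \<le> sqrt 2 * \<zeta>"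
proof
  fix s assume s: "s \<in> {s1, s2, s3}"
  obtain c \<sigma>1 \<sigma>2 where \<sigma>: "\<sigma>1 \<in> {-1, 1}" "\<sigma>2 \<in> {-1, 1}"
    and S: "{s1, s2, s3} = {c, c + (\<sigma>1 * \<zeta>, 0), c + (0, \<sigma>2 * \<zeta>)}"
    and hull: "t0 \<in> convex hull {s1, s2, s3}"
    using assms(1) unfolding nearest_samples_def by blast
  obtain y where y: "y \<in> {s1, s2, s3}"
    and furthest: "\<forall>x\<in>convex hull {s1, s2, s3}. norm (x - s) \<le> norm (y - s)"
    using simplex_furthest_le[of "{s1, s2, s3}" s] by blast
  have "dist s t0 \<le> dist y s"
    using furthest hull by (auto simp: dist_norm norm_minus_commute)
  also have "\<dots> \<le> sqrt 2 * \<zeta>"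
    using right_triangle_dist_le[OF assms(2) \<sigma>] y s unfolding S by blast
  finally show "dist s t0 \<le> sqrt 2 * \<zeta>" .
qed

lemma sqrt_2_le_3_halves: "sqrt 2 \<le> 3 / 2"
  by (rule real_le_lsqrt) (auto simp: power2_eq_square)

lemma gaussK_diff: "gaussK (s - t) = gaussK s * exp (inner s t - (norm t)\<^sup>2 / 2)"
  unfolding gaussK_def exp_add[symmetric] dot_norm_neg[of s t] by (simp add: field_simps)

lemma hermite_factors_bound:
  assumes "P \<in> hermite_factors"
  shows "\<bar>P v\<bar> \<le> (norm v)\<^sup>2 + 1"
proof -
  obtain x y where v: "v = (x, y)" by (cases v)
  have "\<bar>x\<bar> \<le> x\<^sup>2 + 1" "\<bar>y\<bar> \<le> y\<^sup>2 + 1" "2 * \<bar>x * y\<bar> \<le> x\<^sup>2 + y\<^sup>2"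
    using sum_squares_ge_zero[of "\<bar>x\<bar> - 1" 0] sum_squares_ge_zero[of "\<bar>y\<bar> - 1" 0]
      sum_squares_ge_zero[of "\<bar>x\<bar> - \<bar>y\<bar>" 0]
    by (simp_all add: power2_eq_square algebra_simps abs_mult)
  moreover have "0 \<le> \<bar>x * y\<bar>"
    by simp
  moreover have "\<bar>x\<^sup>2 - 1\<bar> \<le> x\<^sup>2 + 1" "\<bar>y\<^sup>2 - 1\<bar> \<le> y\<^sup>2 + 1"
    by (simp_all add: abs_le_iff)
  moreover have "(norm v)\<^sup>2 = x\<^sup>2 + y\<^sup>2" "0 \<le> x\<^sup>2" "0 \<le> y\<^sup>2"
    by (simp_all add: v norm_Pair)
  ultimately show ?thesis
    using assms unfolding hermite_factors_def v by auto
qed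

lemma sample_offset_square_bound:
  fixes s t :: "real \<times> real"
  assumes "norm s \<le> 3 / 2" "10 \<le> norm t"
  shows "(norm (s - t))\<^sup>2 + 1 \<le> 2 * (norm t)\<^sup>2"
proof -
  have "norm (s - t) \<le> 3 / 2 + norm t"
    using norm_triangle_ineq4[of s t] assms(1) by linarith
  then have "(norm (s - t))\<^sup>2 \<le> (3 / 2 + norm t)\<^sup>2"
    by (intro power_mono) simp_all
  moreover have "(3 / 2 + norm t)\<^sup>2 + 1 \<le> 2 * (norm t)\<^sup>2"
    using mult_right_mono[OF assms(2), of "norm t"] assms(2)
    by (simp add: power2_eq_square algebra_simps)
  ultimately show ?thesis by linarith
qed

lemma gauss_mult_shift_bound:
  assumes P: "\<And>v. \<bar>P v\<bar> \<le> (norm v)\<^sup>2 + 1"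
    and c: "\<bar>c * gaussK s\<bar> \<le> 1 / \<zeta>" and s: "norm s \<le> sqrt 2 * \<zeta>"
    and \<zeta>: "0 < \<zeta>" "\<zeta> \<le> 1" and t: "10 \<le> norm t"
  shows "\<bar>c * gauss_mult P (s - t)\<bar>
           \<le> 1 / \<zeta> * (2 * (norm t)\<^sup>2) * exp (- (norm t)\<^sup>2 / 2 + sqrt 2 * \<zeta> * norm t)"
proof -
  have "sqrt 2 * \<zeta> \<le> sqrt 2"
    using \<zeta> by simp
  then have "\<bar>P (s - t)\<bar> \<le> 2 * (norm t)\<^sup>2"
    using P[of "s - t"] sample_offset_square_bound[of s t] sqrt_2_le_3_halves s t by linarith
  moreover have "inner s t \<le> sqrt 2 * \<zeta> * norm t"
    using norm_cauchy_schwarz[of s t] mult_right_mono[OF s norm_ge_zero[of t]] by linarith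
  then have "exp (inner s t - (norm t)\<^sup>2 / 2) \<le> exp (- (norm t)\<^sup>2 / 2 + sqrt 2 * \<zeta> * norm t)"
    by simp
  ultimately have "\<bar>c * gaussK s\<bar> * \<bar>P (s - t)\<bar> * exp (inner s t - (norm t)\<^sup>2 / 2)
                     \<le> 1 / \<zeta> * (2 * (norm t)\<^sup>2) * exp (- (norm t)\<^sup>2 / 2 + sqrt 2 * \<zeta> * norm t)"
    using c \<zeta> by (intro mult_mono) auto
  then show ?thesis
    by (simp add: gauss_mult_def gaussK_diff abs_mult mult_ac)
qed

lemma kernel_sum_gauss_mult_bound:
  assumes P: "\<And>v. \<bar>P v\<bar> \<le> (norm v)\<^sup>2 + 1"
    and c: "\<bar>\<kappa> * gaussK s1\<bar> \<le> 1 / \<zeta>" "\<bar>\<mu> * gaussK s2\<bar> \<le> 1 / \<zeta>" "\<bar>\<rho> * gaussK s3\<bar> \<le> 1 / \<zeta>"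
    and s: "\<forall>s\<in>{s1, s2, s3}. norm s \<le> sqrt 2 * \<zeta>"
    and \<zeta>: "0 < \<zeta>" "\<zeta> \<le> 1" and t: "10 \<le> norm t"
  shows "\<bar>kernel_sum (gauss_mult P) \<kappa> \<mu> \<rho> s1 s2 s3 t\<bar> \<le> gbound \<zeta> t"
proof -
  note term_bound = gauss_mult_shift_bound[OF P _ _ \<zeta> t]
  have "\<bar>kernel_sum (gauss_mult P) \<kappa> \<mu> \<rho> s1 s2 s3 t\<bar>
        \<le> \<bar>\<kappa> * gauss_mult P (s1 - t)\<bar> + \<bar>\<mu> * gauss_mult P (s2 - t)\<bar> + \<bar>\<rho> * gauss_mult P (s3 - t)\<bar>"
    unfolding kernel_sum_def by linarith
  also have "\<dots> \<le> 3 * (1 / \<zeta> * (2 * (norm t)\<^sup>2) * exp (- (norm t)\<^sup>2 / 2 + sqrt 2 * \<zeta> * norm t))"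
    using term_bound[OF c(1)] term_bound[OF c(2)] term_bound[OF c(3)] s by simp
  also have "\<dots> = gbound \<zeta> t"
    by (simp add: gbound_def)
  finally show ?thesis .
qed

lemma nearest_samples_wave_bound:
  fixes W :: "real \<times> real \<Rightarrow> real"
  assumes W: "W = wave \<kappa> \<mu> \<rho> s1 s2 s3"
    and samples: "nearest_samples \<zeta> (0, 0) s1 s2 s3" and \<zeta>: "0 < \<zeta>" "\<zeta> \<le> 1"
    and vanishes: "W (0, 0) = 0" and gradient: "\<bar>dx W (0, 0)\<bar> + \<bar>dy W (0, 0)\<bar> \<le> 1"
    and t: "10 \<le> norm t"
    and D: "D \<in> {W, dx W, dy W, dx (dx W), dx (dy W), dy (dx W), dy (dy W)}"
  shows "\<bar>D t\<bar> \<le> gbound \<zeta> t"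
proof -
  note W_eq = W wave_eq_kernel_sum
  have "\<kappa> * gaussK s1 + \<mu> * gaussK s2 + \<rho> * gaussK s3 = 0"
    using vanishes by (simp add: W_eq kernel_sum_def zero_prod_def[symmetric])
  moreover have "(\<kappa> * gaussK s1) *\<^sub>R s1 + (\<mu> * gaussK s2) *\<^sub>R s2 + (\<rho> * gaussK s3) *\<^sub>R s3
                   = (dx W (0, 0), dy W (0, 0))"
    by (simp add: W_eq kernel_sum_gauss_partials kernel_sum_def gauss_mult_def prod_eq_iff mult_ac
        zero_prod_def[symmetric])
  ultimately have "\<forall>a\<in>{\<kappa> * gaussK s1, \<mu> * gaussK s2, \<rho> * gaussK s3}.
                     \<bar>a\<bar> \<le> (\<bar>fst (dx W (0, 0), dy W (0, 0))\<bar> + \<bar>snd (dx W (0, 0), dy W (0, 0))\<bar>) / \<zeta>"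
    by (rule nearest_samples_weights_bound[OF samples \<zeta>(1)])
  then have weights: "\<forall>a\<in>{\<kappa> * gaussK s1, \<mu> * gaussK s2, \<rho> * gaussK s3}. \<bar>a\<bar> \<le> 1 / \<zeta>"
    using divide_right_mono[OF gradient, of \<zeta>] \<zeta>(1) by (auto intro: order_trans)
  have norms: "\<forall>s\<in>{s1, s2, s3}. norm s \<le> sqrt 2 * \<zeta>"
    using nearest_samples_dist_bound[OF samples] \<zeta>(1) by (simp add: dist_norm zero_prod_def[symmetric])
  have "D \<in> (\<lambda>P. kernel_sum (gauss_mult P) \<kappa> \<mu> \<rho> s1 s2 s3) ` hermite_factors"
    using D unfolding W_eq kernel_sum_gauss_partials
    unfolding hermite_factors_def image_insert image_empty gaussK_eq_gauss_mult by blast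
  then obtain P where P: "P \<in> hermite_factors"
    and D_eq: "D = kernel_sum (gauss_mult P) \<kappa> \<mu> \<rho> s1 s2 s3"
    by blast
  show ?thesis
    unfolding D_eq using weights
    by (intro kernel_sum_gauss_mult_bound[OF hermite_factors_bound[OF P] _ _ _ norms \<zeta> t]) simp_all
qed

lemma exp_35_lower: "(5 / 2 :: real) ^ 35 \<le> exp 35"
proof -
  have "5 / 2 \<le> exp (1 :: real)"
    using exp_lower_Taylor_quadratic[of 1] by simp
  then have "(5 / 2 :: real) ^ 35 \<le> exp 1 ^ 35"
    by (rule power_mono) simp
  also have "\<dots> = exp 35"
    using exp_of_nat_mult[of 35 "1 :: real"] by simp
  finally show ?thesis .
qed

lemma square_gauss_tail_bound:
  fixes r :: real
  assumes "10 \<le> r"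
  shows "r\<^sup>2 * exp (- r\<^sup>2 / 2 + 3 / 2 * r) \<le> 100 * exp (- 35)"
proof -
  define d where "d = r - 10"
  have d: "0 \<le> d"
    using assms by (simp add: d_def)
  have "(1 + d / 10)\<^sup>2 \<le> (exp (d / 10))\<^sup>2"
    using exp_ge_add_one_self[of "d / 10"] d by (intro power_mono) simp_all
  also have "\<dots> = exp (d / 5)"
    by (simp add: exp_add[symmetric] power2_eq_square)
  finally have r2: "r\<^sup>2 \<le> 100 * exp (d / 5)"
    by (simp add: d_def power2_eq_square field_simps)
  have "d / 5 + (- r\<^sup>2 / 2 + 3 / 2 * r) = - 35 - 83 / 10 * d - d\<^sup>2 / 2"
    by (simp add: d_def power2_eq_square field_simps)
  then have "d / 5 + (- r\<^sup>2 / 2 + 3 / 2 * r) \<le> - 35"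
    using d zero_le_power2[of d] by linarith
  then have decay: "exp (d / 5) * exp (- r\<^sup>2 / 2 + 3 / 2 * r) \<le> exp (- 35)"
    by (simp add: exp_add[symmetric])
  have "r\<^sup>2 * exp (- r\<^sup>2 / 2 + 3 / 2 * r) \<le> 100 * exp (d / 5) * exp (- r\<^sup>2 / 2 + 3 / 2 * r)"
    using r2 by (rule mult_right_mono) simp
  also have "\<dots> \<le> 100 * exp (- 35)"
    using decay by (simp add: mult.assoc)
  finally show ?thesis .
qed

lemma gbound_small:
  assumes \<zeta>: "10 powr (- 2) \<le> \<zeta>" "\<zeta> \<le> 1" and t: "10 \<le> norm t"
  shows "gbound \<zeta> t < 2 * 10 powr (- 9)"
proof -
  define r where "r = norm t"
  have \<zeta>_low: "1 / 100 \<le> \<zeta>"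
    using \<zeta>(1) by (simp add: powr_minus)
  have "sqrt 2 * \<zeta> \<le> 3 / 2"
    using mult_mono[OF sqrt_2_le_3_halves \<zeta>(2)] \<zeta>_low by simp
  then have "exp (- r\<^sup>2 / 2 + sqrt 2 * \<zeta> * r) \<le> exp (- r\<^sup>2 / 2 + 3 / 2 * r)"
    using mult_right_mono[of "sqrt 2 * \<zeta>" "3 / 2" r] by (simp add: r_def)
  moreover have "6 / \<zeta> \<le> 600"
    using \<zeta>_low by (simp add: divide_le_eq)
  ultimately have "6 / \<zeta> * (r\<^sup>2 * exp (- r\<^sup>2 / 2 + sqrt 2 * \<zeta> * r))
                     \<le> 600 * (r\<^sup>2 * exp (- r\<^sup>2 / 2 + 3 / 2 * r))"
    by (intro mult_mono mult_left_mono) simp_all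
  then have "gbound \<zeta> t \<le> 600 * (r\<^sup>2 * exp (- r\<^sup>2 / 2 + 3 / 2 * r))"
    by (simp add: gbound_def r_def)
  also have "\<dots> \<le> 60000 * exp (- 35)"
    using square_gauss_tail_bound[of r] t by (simp add: r_def)
  also have "\<dots> < 2 * 10 powr (- 9)"
  proof -
    have "60000 * 10 ^ 9 < 2 * (5 / 2 :: real) ^ 35"
      by (simp add: power_divide)
    also have "\<dots> \<le> 2 * exp 35"
      using exp_35_lower by simp
    finally show ?thesis
      by (simp add: exp_minus powr_minus field_simps)
  qed
  finally show ?thesis .
qed

theorem lemmaC6:
  fixes \<zeta> \<kappa>1 \<mu>1 \<rho>1 \<kappa>2 \<mu>2 \<rho>2 :: real
    and s1 s2 s3 :: "real \<times> real"
  defines "W1 \<equiv> wave \<kappa>1 \<mu>1 \<rho>1 s1 s2 s3"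
      and "W2 \<equiv> wave \<kappa>2 \<mu>2 \<rho>2 s1 s2 s3"
  assumes "0 < \<zeta>" and "\<zeta> \<le> 1"
    and "nearest_samples \<zeta> (0, 0) s1 s2 s3"
    and "W1 (0, 0) = 0" and "dx W1 (0, 0) = 1" and "dy W1 (0, 0) = 0"
    and "W2 (0, 0) = 0" and "dx W2 (0, 0) = 0" and "dy W2 (0, 0) = 1"
  shows "(\<forall>W \<in> {W1, W2}. \<forall>t. norm t \<ge> 10 \<longrightarrow>
            (\<forall>D \<in> {W, dx W, dy W, dx (dx W), dx (dy W), dy (dx W), dy (dy W)}.
               \<bar>D t\<bar> \<le> gbound \<zeta> t))
       \<and> (10 powr (-2) \<le> \<zeta> \<longrightarrow> (\<forall>t. norm t \<ge> 10 \<longrightarrow> gbound \<zeta> t < 2 * 10 powr (-9)))"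
proof -
  have wave_bound: "\<forall>t. norm t \<ge> 10 \<longrightarrow>
      (\<forall>D \<in> {W, dx W, dy W, dx (dx W), dx (dy W), dy (dx W), dy (dy W)}. \<bar>D t\<bar> \<le> gbound \<zeta> t)"
    if "W = wave \<kappa> \<mu> \<rho> s1 s2 s3" "W (0, 0) = 0" "\<bar>dx W (0, 0)\<bar> + \<bar>dy W (0, 0)\<bar> \<le> 1"
    for W \<kappa> \<mu> \<rho>
    using nearest_samples_wave_bound[OF that(1) assms(5,3,4) that(2,3)] by blast
  have "\<bar>dx W1 (0, 0)\<bar> + \<bar>dy W1 (0, 0)\<bar> \<le> 1" "\<bar>dx W2 (0, 0)\<bar> + \<bar>dy W2 (0, 0)\<bar> \<le> 1"
    using assms(7,8,10,11) by simp_all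
  then have "\<forall>W \<in> {W1, W2}. \<forall>t. norm t \<ge> 10 \<longrightarrow>
      (\<forall>D \<in> {W, dx W, dy W, dx (dx W), dx (dy W), dy (dx W), dy (dy W)}. \<bar>D t\<bar> \<le> gbound \<zeta> t)"
    using wave_bound[OF W1_def[THEN meta_eq_to_obj_eq] assms(6)]
      wave_bound[OF W2_def[THEN meta_eq_to_obj_eq] assms(9)] by blast
  then show ?thesis
    using gbound_small assms(4) by blast
qed

end
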